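(* Let $k\ge1$. If $k$ is even, the evaluation problem of $\Sigma_k$-DNF (i.e. the class of $\tau$-structures encoding true $\Sigma_k$-DNF formulas) is definable by a $\Sigma^1_{k+1}\text{-}\mathrm{KROM}^r(\tau)$ sentence; if $k$ is odd, the evaluation problem of $\Pi_k$-DNF is definable by a $\Pi^1_{k+1}\text{-}\mathrm{KROM}^r(\tau)$ sentence. Here $\tau=\{\mathrm{Clause},\mathrm{Var}_1,\dots,\mathrm{Var}_k,\mathrm{Pos},\mathrm{Neg}\}$ and formulas are encoded as described in the context.
   Context: A $\Sigma_k$-DNF (resp. $\Pi_k$-DNF) formula is a quantified Boolean formula $Q_1\bar{x}_1Q_2\bar{x}_2\cdots Q_k\bar{x}_k\,\phi$ with alternating quantifier blocks, $Q_1=\exists$ (resp. $Q_1=\forall$), and quantifier-free matrix $\phi$ in disjunctive normal form (a disjunction of "clauses", each a conjunction of literals). Such a formula is encoded by a finite structure over $\tau=\{\mathrm{Clause},\mathrm{Var}_1,\dots,\mathrm{Var}_k,\mathrm{Pos},\mathrm{Neg}\}$ ($\mathrm{Clause},\mathrm{Var}_h$ unary, $\mathrm{Pos},\mathrm{Neg}$ binary) whose domain consists of the clauses and variables, where $\mathrm{Clause}\,i$ holds iff $i$ is a clause, $\mathrm{Var}_h\,j$ iff $j$ is a variable of block $\bar{x}_h$, and $\mathrm{Pos}\,ij$ (resp. $\mathrm{Neg}\,ij$) iff variable $j$ occurs positively (resp. negatively) in clause $i$. For a vocabulary $\tau$, an SO-KROM$^r(\tau)$ formula is a second-order formula $Q_1R_1\cdots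 Q_mR_m\forall\bar{x}(C_1\wedge\cdots\wedge C_n)$, where each $Q_i\in\{\forall,\exists\}$, $R_i$ are second-order relation variables, and each clause $C_j$ is a disjunction $\beta_1\vee\cdots\vee\beta_q\vee H_1\vee H_2$ in which each $\beta_s$ is an atomic or negated atomic $\tau$-formula (equality included), and each $H_t$ is one of $R_i\bar{z}$, $\neg R_i\bar{z}$, $\exists z_1\cdots\exists z_{r}R_i z_1\dots z_r$ ($r$ the arity of $R_i$), or $\bot$. $\Sigma^1_k\text{-}\mathrm{KROM}^r$ (resp. $\Pi^1_k\text{-}\mathrm{KROM}^r$) is the set of SO-KROM$^r$ formulas whose second-order prefix starts with an existential (resp. universal) quantifier and has exactly $k-1$ alternations between blocks of existential and universal quantifiers. *)

theory Defs
  imports Main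
begin

text \<open>Universe elements are natural numbers (every finite structure is isomorphic to one
  over nat). Var h x means x is a variable of block h (1 <= h <= k).\<close>

record tstruct =
  dom    :: "nat set"
  Clause :: "nat \<Rightarrow> bool"
  Var    :: "nat \<Rightarrow> nat \<Rightarrow> bool"
  Pos    :: "nat \<Rightarrow> nat \<Rightarrow> bool"
  Neg    :: "nat \<Rightarrow> nat \<Rightarrow> bool"

definition tau_structure :: "nat \<Rightarrow> tstruct \<Rightarrow> bool" where
  "tau_structure k A \<longleftrightarrow> finite (dom A) \<and> dom A \<noteq> {} \<and>
     (\<forall>x. Clause A x \<longrightarrow> x \<in> dom A) \<and>
     (\<forall>h x. Var A h x \<longrightarrow> 1 \<le> h \<and> h \<le> k \<and> x \<in> dom A) \<and>
     (\<forall>x y. Pos A x y \<longrightarrow> x \<in> dom A \<and> y \<in> dom A) \<and>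
     (\<forall>x y. Neg A x y \<longrightarrow> x \<in> dom A \<and> y \<in> dom A)"

definition encodes_qdnf :: "nat \<Rightarrow> tstruct \<Rightarrow> bool" where
  "encodes_qdnf k A \<longleftrightarrow>
     (\<forall>x\<in>dom A. (Clause A x \<and> (\<forall>h. \<not> Var A h x)) \<or> (\<not> Clause A x \<and> (\<exists>!h. Var A h x))) \<and>
     (\<forall>i j. Pos A i j \<longrightarrow> Clause A i \<and> \<not> Clause A j) \<and>
     (\<forall>i j. Neg A i j \<longrightarrow> Clause A i \<and> \<not> Clause A j)"

definition dnf_true :: "tstruct \<Rightarrow> (nat \<Rightarrow> bool) \<Rightarrow> bool" where
  "dnf_true A \<sigma> \<longleftrightarrow> (\<exists>i\<in>dom A. Clause A i \<and>
      (\<forall>j\<in>dom A. (Pos A i j \<longrightarrow> \<sigma> j) \<and> (Neg A i j \<longrightarrow> \<not> \<sigma> j)))"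

definition upd_block :: "tstruct \<Rightarrow> nat \<Rightarrow> (nat \<Rightarrow> bool) \<Rightarrow> (nat \<Rightarrow> bool) \<Rightarrow> (nat \<Rightarrow> bool)" where
  "upd_block A h f \<sigma> = (\<lambda>j. if Var A h j then f j else \<sigma> j)"

text \<open>qeval A k ex m sigma: the last m blocks (k-m+1 .. k) are still to be quantified,
  the current block being quantified existentially iff ex; quantifiers alternate.\<close>
fun qeval :: "tstruct \<Rightarrow> nat \<Rightarrow> bool \<Rightarrow> nat \<Rightarrow> (nat \<Rightarrow> bool) \<Rightarrow> bool" where
  "qeval A k ex 0 \<sigma> = dnf_true A \<sigma>"
| "qeval A k ex (Suc m) \<sigma> =
     (if ex then (\<exists>f. qeval A k (\<not> ex) m (upd_block A (k - m) f \<sigma>))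
      else (\<forall>f. qeval A k (\<not> ex) m (upd_block A (k - m) f \<sigma>)))"

definition sigma_dnf_eval :: "nat \<Rightarrow> tstruct set" where
  "sigma_dnf_eval k = {A. tau_structure k A \<and> encodes_qdnf k A \<and> qeval A k True k (\<lambda>_. False)}"

definition pi_dnf_eval :: "nat \<Rightarrow> tstruct set" where
  "pi_dnf_eval k = {A. tau_structure k A \<and> encodes_qdnf k A \<and> qeval A k False k (\<lambda>_. False)}"

datatype tatom = AClause nat | AVar nat nat | APos nat nat | ANeg nat nat | AEq nat nat

text \<open>Second-order literal slots H_t: R_i zs, not R_i zs, (exists zs. R_i zs), bottom.
  i indexes the second-order prefix.\<close>
datatype hlit = HPos nat "nat list" | HNeg nat "nat list" | HEx nat | HBot

text \<open>A clause beta_1 \/ ... \/ beta_q \/ H_1 \/ H_2; each beta is (polarity, atom).\<close>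
type_synonym kclause = "(bool \<times> tatom) list \<times> hlit \<times> hlit"

text \<open>A sentence Q_1 R_1 ... Q_m R_m forall x. (C_1 /\ ... /\ C_n): the prefix lists
  (is_existential, arity) for each R_i.\<close>
type_synonym krom = "(bool \<times> nat) list \<times> kclause list"

fun tatom_wf :: "nat \<Rightarrow> tatom \<Rightarrow> bool" where
  "tatom_wf k (AVar h z) = (1 \<le> h \<and> h \<le> k)"
| "tatom_wf k _ = True"

fun hlit_wf :: "(bool \<times> nat) list \<Rightarrow> hlit \<Rightarrow> bool" where
  "hlit_wf P (HPos i zs) = (i < length P \<and> length zs = snd (P ! i))"
| "hlit_wf P (HNeg i zs) = (i < length P \<and> length zs = snd (P ! i))"
| "hlit_wf P (HEx i) = (i < length P)"
| "hlit_wf P HBot = True"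

definition krom_wf :: "nat \<Rightarrow> krom \<Rightarrow> bool" where
  "krom_wf k \<phi> \<longleftrightarrow> (\<forall>(bs, h1, h2) \<in> set (snd \<phi>).
      (\<forall>(b, a) \<in> set bs. tatom_wf k a) \<and> hlit_wf (fst \<phi>) h1 \<and> hlit_wf (fst \<phi>) h2)"

fun alternations :: "bool list \<Rightarrow> nat" where
  "alternations (a # b # xs) = (if a = b then 0 else 1) + alternations (b # xs)"
| "alternations _ = 0"

text \<open>Sigma^1_m-KROM^r (ex = True) / Pi^1_m-KROM^r (ex = False) over tau with k variable blocks:
  prefix starts with the given quantifier and has exactly m-1 alternations.\<close>
definition krom_class :: "bool \<Rightarrow> nat \<Rightarrow> nat \<Rightarrow> krom \<Rightarrow> bool" where
  "krom_class ex m k \<phi> \<longleftrightarrow> krom_wf k \<phi> \<and> fst \<phi> \<noteq> [] \<and> fst (hd (fst \<phi>)) = ex \<and>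
     alternations (map fst (fst \<phi>)) = m - 1"

fun tatom_sem :: "tstruct \<Rightarrow> (nat \<Rightarrow> nat) \<Rightarrow> tatom \<Rightarrow> bool" where
  "tatom_sem A v (AClause z) = Clause A (v z)"
| "tatom_sem A v (AVar h z) = Var A h (v z)"
| "tatom_sem A v (APos z z') = Pos A (v z) (v z')"
| "tatom_sem A v (ANeg z z') = Neg A (v z) (v z')"
| "tatom_sem A v (AEq z z') = (v z = v z')"

fun hlit_sem :: "tstruct \<Rightarrow> (bool \<times> nat) list \<Rightarrow> nat list set list \<Rightarrow> (nat \<Rightarrow> nat) \<Rightarrow> hlit \<Rightarrow> bool" where
  "hlit_sem A P Rs v (HPos i zs) = (map v zs \<in> Rs ! i)"
| "hlit_sem A P Rs v (HNeg i zs) = (map v zs \<notin> Rs ! i)"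
| "hlit_sem A P Rs v (HEx i) =
     (\<exists>us. length us = snd (P ! i) \<and> set us \<subseteq> dom A \<and> us \<in> Rs ! i)"
| "hlit_sem A P Rs v HBot = False"

definition kclause_sem :: "tstruct \<Rightarrow> (bool \<times> nat) list \<Rightarrow> nat list set list \<Rightarrow> (nat \<Rightarrow> nat) \<Rightarrow> kclause \<Rightarrow> bool" where
  "kclause_sem A P Rs v c = (case c of (bs, h1, h2) \<Rightarrow>
     (\<exists>(b, a) \<in> set bs. tatom_sem A v a = b) \<or> hlit_sem A P Rs v h1 \<or> hlit_sem A P Rs v h2)"

definition matrix_sem :: "tstruct \<Rightarrow> (bool \<times> nat) list \<Rightarrow> nat list set list \<Rightarrow> kclause list \<Rightarrow> bool" where
  "matrix_sem A P Rs cs \<longleftrightarrow>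
     (\<forall>v. (\<forall>x. v x \<in> dom A) \<longrightarrow> (\<forall>c\<in>set cs. kclause_sem A P Rs v c))"

fun prefix_sem :: "tstruct \<Rightarrow> (bool \<times> nat) list \<Rightarrow> (bool \<times> nat) list \<Rightarrow> nat list set list \<Rightarrow> kclause list \<Rightarrow> bool" where
  "prefix_sem A P [] Rs cs = matrix_sem A P Rs cs"
| "prefix_sem A P ((q, r) # qs) Rs cs =
     (if q then (\<exists>R. R \<subseteq> {us. length us = r \<and> set us \<subseteq> dom A} \<and> prefix_sem A P qs (Rs @ [R]) cs)
      else (\<forall>R. R \<subseteq> {us. length us = r \<and> set us \<subseteq> dom A} \<longrightarrow> prefix_sem A P qs (Rs @ [R]) cs))"

definition krom_sat :: "tstruct \<Rightarrow> krom \<Rightarrow> bool" where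
  "krom_sat A \<phi> = prefix_sem A (fst \<phi>) (fst \<phi>) [] (snd \<phi>)"

definition krom_defines :: "nat \<Rightarrow> krom \<Rightarrow> tstruct set \<Rightarrow> bool" where
  "krom_defines k \<phi> K \<longleftrightarrow> (\<forall>A. tau_structure k A \<longrightarrow> (krom_sat A \<phi> \<longleftrightarrow> A \<in> K))"

end

theory Submission
  imports Defs
begin

text \<open>Quantify the truth assignment of each variable block \<open>h\<close> by a unary relation \<open>R\<^sub>h\<close>,
  with the quantifier of that block, and close the prefix with \<open>\<exists>S\<close> for a unary relation \<open>S\<close>
  that selects a clause. The matrix says that the structure is a well-formed encoding, that
  \<open>S\<close> is a nonempty set of clauses, and that for every clause in \<open>S\<close> each positive variable of
  block \<open>h\<close> lies in \<open>R\<^sub>h\<close> and each negative one does not. Each of these clauses mentions at most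
  \<open>S\<close> and one \<open>R\<^sub>h\<close>, so the matrix is Krom. The last block of a \<open>\<Sigma>\<^sub>k\<close>-formula with \<open>k\<close> even
  (or of a \<open>\<Pi>\<^sub>k\<close>-formula with \<open>k\<close> odd) is universal, so the final \<open>\<exists>S\<close> adds exactly one
  alternation.\<close>

fun tatom_vars :: "tatom \<Rightarrow> nat set" where
  "tatom_vars (AClause z) = {z}"
| "tatom_vars (AVar h z) = {z}"
| "tatom_vars (APos z z') = {z, z'}"
| "tatom_vars (ANeg z z') = {z, z'}"
| "tatom_vars (AEq z z') = {z, z'}"

fun hlit_vars :: "hlit \<Rightarrow> nat set" where
  "hlit_vars (HPos i zs) = set zs"
| "hlit_vars (HNeg i zs) = set zs"
| "hlit_vars _ = {}"

fun kclause_vars :: "kclause \<Rightarrow> nat set" where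
  "kclause_vars (bs, h1, h2) = (\<Union>(b, a)\<in>set bs. tatom_vars a) \<union> hlit_vars h1 \<union> hlit_vars h2"

lemma tatom_sem_cong: "(\<And>z. z \<in> tatom_vars a \<Longrightarrow> v z = v' z) \<Longrightarrow> tatom_sem A v a = tatom_sem A v' a"
  by (cases a) auto

lemma hlit_sem_cong: "(\<And>z. z \<in> hlit_vars h \<Longrightarrow> v z = v' z) \<Longrightarrow> hlit_sem A P Rs v h = hlit_sem A P Rs v' h"
  by (cases h) (simp_all add: map_eq_conv[symmetric] del: map_eq_conv cong: map_cong)

lemma kclause_sem_cong:
  assumes "\<And>z. z \<in> kclause_vars c \<Longrightarrow> v z = v' z"
  shows "kclause_sem A P Rs v c = kclause_sem A P Rs v' c"
proof -
  obtain bs h1 h2 where c: "c = (bs, h1, h2)"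
    by (cases c)
  have "\<forall>(b, a)\<in>set bs. tatom_sem A v a = tatom_sem A v' a"
    using assms c by (auto intro!: tatom_sem_cong)
  moreover have "hlit_sem A P Rs v h1 = hlit_sem A P Rs v' h1" "hlit_sem A P Rs v h2 = hlit_sem A P Rs v' h2"
    using assms c by (auto intro!: hlit_sem_cong)
  ultimately show ?thesis
    unfolding kclause_sem_def c by fastforce
qed

lemma matrix_sem_two_vars:
  assumes "\<forall>c\<in>set cs. kclause_vars c \<subseteq> {0, 1}"
  shows "matrix_sem A P Rs cs \<longleftrightarrow>
    (\<forall>x\<in>dom A. \<forall>y\<in>dom A. \<forall>c\<in>set cs. kclause_sem A P Rs (\<lambda>n. if n = 0 then x else y) c)"
proof
  assume "matrix_sem A P Rs cs"
  then show "\<forall>x\<in>dom A. \<forall>y\<in>dom A. \<forall>c\<in>set cs. kclause_sem A P Rs (\<lambda>n. if n = 0 then x else y) c"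
    unfolding matrix_sem_def by simp
next
  assume two: "\<forall>x\<in>dom A. \<forall>y\<in>dom A. \<forall>c\<in>set cs. kclause_sem A P Rs (\<lambda>n. if n = 0 then x else y) c"
  show "matrix_sem A P Rs cs"
    unfolding matrix_sem_def
  proof (intro allI impI ballI)
    fix v :: "nat \<Rightarrow> nat" and c assume v: "\<forall>x. v x \<in> dom A" and c: "c \<in> set cs"
    have "kclause_sem A P Rs (\<lambda>n. if n = 0 then v 0 else v 1) c"
      using two v c by blast
    moreover have "z \<in> kclause_vars c \<Longrightarrow> (if z = 0 then v 0 else v 1) = v z" for z
      using assms c by auto
    ultimately show "kclause_sem A P Rs v c"
      using kclause_sem_cong[of c "\<lambda>n. if n = 0 then v 0 else v 1" v] by simp
  qed
qed

lemma matrix_sem_append: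
  "matrix_sem A P Rs (cs @ ds) \<longleftrightarrow> matrix_sem A P Rs cs \<and> matrix_sem A P Rs ds"
  by (auto simp: matrix_sem_def)

text \<open>Every second-order quantifier ranges over a nonempty set (it contains the empty
  relation), so it commutes with a conjunct that does not mention the relations.\<close>

lemma prefix_sem_append_independent:
  assumes "\<And>Rs. matrix_sem A P Rs cs = C"
  shows "prefix_sem A P qs Rs (cs @ ds) = (C \<and> prefix_sem A P qs Rs ds)"
proof (induction qs arbitrary: Rs)
  case Nil
  then show ?case
    by (simp add: matrix_sem_append assms)
next
  case (Cons q qs)
  then show ?case
    by (cases q) (auto intro: exI[of _ "{}"])
qed

lemma quantify_unary_relation:
  assumes "\<And>R f. \<forall>j\<in>D. [j] \<in> R \<longleftrightarrow> f j \<Longrightarrow> P R \<longleftrightarrow> Q f"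
  shows ex_unary_relation_iff: "(\<exists>R. R \<subseteq> {us. length us = 1 \<and> set us \<subseteq> D} \<and> P R) \<longleftrightarrow> (\<exists>f. Q f)"
    and all_unary_relation_iff: "(\<forall>R. R \<subseteq> {us. length us = 1 \<and> set us \<subseteq> D} \<longrightarrow> P R) \<longleftrightarrow> (\<forall>f. Q f)"
proof -
  have to_fun: "P R \<longleftrightarrow> Q (\<lambda>j. [j] \<in> R)" for R
    by (rule assms) simp
  have to_rel: "P {[j] | j. j \<in> D \<and> f j} \<longleftrightarrow> Q f" for f
    by (rule assms) simp
  have rel_sub: "{[j] | j. j \<in> D \<and> f j} \<subseteq> {us. length us = 1 \<and> set us \<subseteq> D}" for f
    by auto
  show "(\<exists>R. R \<subseteq> {us. length us = 1 \<and> set us \<subseteq> D} \<and> P R) \<longleftrightarrow> (\<exists>f. Q f)"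
  proof
    assume "\<exists>R. R \<subseteq> {us. length us = 1 \<and> set us \<subseteq> D} \<and> P R"
    then obtain R where "P R" by blast
    then show "\<exists>f. Q f" using to_fun[of R] by blast
  next
    assume "\<exists>f. Q f"
    then obtain f where "Q f" ..
    then show "\<exists>R. R \<subseteq> {us. length us = 1 \<and> set us \<subseteq> D} \<and> P R"
      using to_rel[of f] rel_sub[of f] by blast
  qed
  show "(\<forall>R. R \<subseteq> {us. length us = 1 \<and> set us \<subseteq> D} \<longrightarrow> P R) \<longleftrightarrow> (\<forall>f. Q f)"
  proof
    assume all_R: "\<forall>R. R \<subseteq> {us. length us = 1 \<and> set us \<subseteq> D} \<longrightarrow> P R"
    show "\<forall>f. Q f"
    proof
      fix f
      show "Q f" using all_R rel_sub[of f] to_rel[of f] by blast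
    qed
  next
    assume "\<forall>f. Q f"
    then show "\<forall>R. R \<subseteq> {us. length us = 1 \<and> set us \<subseteq> D} \<longrightarrow> P R"
      by (simp add: to_fun)
  qed
qed

text \<open>\<open>block_prefix n\<close> quantifies the relations of the last \<open>n\<close> blocks, the first of them
  existentially iff \<open>n\<close> is even (matching \<open>qeval A k (even n) n\<close>), and then \<open>S\<close>.\<close>

fun block_prefix :: "nat \<Rightarrow> (bool \<times> nat) list" where
  "block_prefix 0 = [(True, 1)]"
| "block_prefix (Suc n) = (odd n, 1) # block_prefix n"

lemma length_block_prefix [simp]: "length (block_prefix n) = Suc n"
  by (induction n) simp_all

lemma snd_nth_block_prefix: "i \<le> n \<Longrightarrow> snd (block_prefix n ! i) = 1"
proof (induction n arbitrary: i)
  case (Suc n)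
  then show ?case
    by (cases i) simp_all
qed simp

lemma alternations_block_prefix: "alternations (map fst (block_prefix n)) = n"
proof (induction n)
  case (Suc n)
  then show ?case
    by (cases n) simp_all
qed simp

definition encoding_clauses :: "nat \<Rightarrow> kclause list" where
  "encoding_clauses k =
     [([(False, AClause 0), (False, AVar h 0)], HBot, HBot). h \<leftarrow> [1..<Suc k]] @
     [((True, AClause 0) # [(True, AVar h 0). h \<leftarrow> [1..<Suc k]], HBot, HBot)] @
     [([(False, AVar h 0), (False, AVar h' 0)], HBot, HBot). h \<leftarrow> [1..<Suc k], h' \<leftarrow> [Suc h..<Suc k]] @
     [([(False, APos 0 1), (True, AClause 0)], HBot, HBot),
      ([(False, APos 0 1), (False, AClause 1)], HBot, HBot),
      ([(False, ANeg 0 1), (True, AClause 0)], HBot, HBot),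
      ([(False, ANeg 0 1), (False, AClause 1)], HBot, HBot)]"

text \<open>Relation number \<open>h - 1\<close> holds the truth assignment of block \<open>h\<close> and relation
  number \<open>k\<close> is the set \<open>S\<close> of selected clauses: \<open>S\<close> is nonempty and consists of clauses
  all of whose literals are true.\<close>

definition evaluation_clauses :: "nat \<Rightarrow> kclause list" where
  "evaluation_clauses k =
     [([], HEx k, HBot),
      ([(True, AClause 0)], HNeg k [0], HBot)] @
     [([(False, APos 0 1), (False, AVar h 1)], HNeg k [0], HPos (h - 1) [1]). h \<leftarrow> [1..<Suc k]] @
     [([(False, ANeg 0 1), (False, AVar h 1)], HNeg k [0], HNeg (h - 1) [1]). h \<leftarrow> [1..<Suc k]]"

definition dnf_sentence :: "nat \<Rightarrow> krom" where
  "dnf_sentence k = (block_prefix k, encoding_clauses k @ evaluation_clauses k)"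

lemma encoding_clauses_vars: "\<forall>c\<in>set (encoding_clauses k). kclause_vars c \<subseteq> {0, 1}"
  by (auto simp: encoding_clauses_def)

lemma evaluation_clauses_vars: "\<forall>c\<in>set (evaluation_clauses k). kclause_vars c \<subseteq> {0, 1}"
  by (auto simp: evaluation_clauses_def)

lemma encoding_clauses_sem:
  "(\<forall>c\<in>set (encoding_clauses k). kclause_sem A P Rs (\<lambda>n. if n = 0 then x else y) c) \<longleftrightarrow>
   (Clause A x \<longrightarrow> (\<forall>h\<in>{1..k}. \<not> Var A h x)) \<and>
   (Clause A x \<or> (\<exists>h\<in>{1..k}. Var A h x)) \<and>
   (\<forall>h\<in>{1..k}. \<forall>h'\<in>{Suc h..k}. \<not> (Var A h x \<and> Var A h' x)) \<and>
   (Pos A x y \<longrightarrow> Clause A x \<and> \<not> Clause A y) \<and>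
   (Neg A x y \<longrightarrow> Clause A x \<and> \<not> Clause A y)"
  by (simp add: encoding_clauses_def kclause_sem_def ball_Un ball_UN atLeastLessThanSuc_atLeastAtMost
      del: upt_Suc) blast

lemma at_most_one_iff_no_ordered_pair:
  assumes "\<And>h. V h \<Longrightarrow> h \<in> {1..k}"
  shows "(\<forall>h\<in>{1..k}. \<forall>h'\<in>{Suc h..k}. \<not> (V h \<and> V h')) \<longleftrightarrow> (\<forall>h h'. V h \<longrightarrow> V h' \<longrightarrow> h = h')"
proof
  assume no_pair: "\<forall>h\<in>{1..k}. \<forall>h'\<in>{Suc h..k}. \<not> (V h \<and> V h')"
  show "\<forall>h h'. V h \<longrightarrow> V h' \<longrightarrow> h = h'"
  proof (intro allI impI)
    fix h h' assume "V h" "V h'"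
    have range: "h \<in> {1..k}" "h' \<in> {1..k}"
      using assms \<open>V h\<close> \<open>V h'\<close> by blast+
    show "h = h'"
    proof (rule linorder_cases)
      assume "h < h'"
      with range have "h' \<in> {Suc h..k}" by simp
      with range no_pair \<open>V h\<close> \<open>V h'\<close> show ?thesis by blast
    next
      assume "h' < h"
      with range have "h \<in> {Suc h'..k}" by simp
      with range no_pair \<open>V h\<close> \<open>V h'\<close> show ?thesis by blast
    qed
  qed
next
  assume "\<forall>h h'. V h \<longrightarrow> V h' \<longrightarrow> h = h'"
  show "\<forall>h\<in>{1..k}. \<forall>h'\<in>{Suc h..k}. \<not> (V h \<and> V h')"
  proof (intro ballI notI)
    fix h h' assume "h' \<in> {Suc h..k}" "V h \<and> V h'"
    with \<open>\<forall>h h'. V h \<longrightarrow> V h' \<longrightarrow> h = h'\<close> show False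
      by (metis Suc_n_not_le_n atLeastAtMost_iff)
  qed
qed

lemma matrix_sem_encoding_clauses:
  assumes "tau_structure k A"
  shows "matrix_sem A P Rs (encoding_clauses k) \<longleftrightarrow> encodes_qdnf k A"
proof -
  have var: "h \<in> {1..k} \<and> x \<in> dom A" if "Var A h x" for h x
    using assms that by (auto simp: tau_structure_def)
  have rel: "x \<in> dom A \<and> y \<in> dom A" if "Pos A x y \<or> Neg A x y" for x y
    using assms that by (auto simp: tau_structure_def)
  have unique: "(\<forall>h\<in>{1..k}. \<forall>h'\<in>{Suc h..k}. \<not> (Var A h x \<and> Var A h' x)) \<longleftrightarrow>
      (\<forall>h h'. Var A h x \<longrightarrow> Var A h' x \<longrightarrow> h = h')" for x
    by (rule at_most_one_iff_no_ordered_pair) (use var in blast)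
  have elem: "((Clause A x \<longrightarrow> (\<forall>h\<in>{1..k}. \<not> Var A h x)) \<and>
      (Clause A x \<or> (\<exists>h\<in>{1..k}. Var A h x)) \<and>
      (\<forall>h\<in>{1..k}. \<forall>h'\<in>{Suc h..k}. \<not> (Var A h x \<and> Var A h' x))) \<longleftrightarrow>
    (Clause A x \<and> (\<forall>h. \<not> Var A h x)) \<or> (\<not> Clause A x \<and> (\<exists>!h. Var A h x))" for x
    unfolding unique using var by blast
  have "dom A \<noteq> {}"
    using assms by (simp add: tau_structure_def)
  then have "matrix_sem A P Rs (encoding_clauses k) \<longleftrightarrow>
    (\<forall>x\<in>dom A. (Clause A x \<longrightarrow> (\<forall>h\<in>{1..k}. \<not> Var A h x)) \<and>
      (Clause A x \<or> (\<exists>h\<in>{1..k}. Var A h x)) \<and>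
      (\<forall>h\<in>{1..k}. \<forall>h'\<in>{Suc h..k}. \<not> (Var A h x \<and> Var A h' x))) \<and>
    (\<forall>x\<in>dom A. \<forall>y\<in>dom A. (Pos A x y \<longrightarrow> Clause A x \<and> \<not> Clause A y) \<and>
      (Neg A x y \<longrightarrow> Clause A x \<and> \<not> Clause A y))"
    unfolding matrix_sem_two_vars[OF encoding_clauses_vars] encoding_clauses_sem by blast
  also have "\<dots> \<longleftrightarrow> encodes_qdnf k A"
    unfolding encodes_qdnf_def elem using rel by blast
  finally show ?thesis .
qed

lemma evaluation_clauses_sem:
  assumes "length Rs = k"
  shows "(\<forall>c\<in>set (evaluation_clauses k).
      kclause_sem A (block_prefix k) (Rs @ [S]) (\<lambda>n. if n = 0 then x else y) c) \<longleftrightarrow>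
    (\<exists>z\<in>dom A. [z] \<in> S) \<and>
    ([x] \<in> S \<longrightarrow> Clause A x \<and> (\<forall>h\<in>{1..k}. Var A h y \<longrightarrow>
       (Pos A x y \<longrightarrow> [y] \<in> Rs ! (h - 1)) \<and> (Neg A x y \<longrightarrow> [y] \<notin> Rs ! (h - 1))))"
proof -
  have "snd (block_prefix k ! k) = 1"
    by (simp add: snd_nth_block_prefix)
  moreover have "(\<exists>us. length us = 1 \<and> set us \<subseteq> dom A \<and> us \<in> S) \<longleftrightarrow> (\<exists>z\<in>dom A. [z] \<in> S)"
    by (auto simp: length_Suc_conv)
  ultimately show ?thesis
    using assms by (simp add: evaluation_clauses_def kclause_sem_def nth_append ball_Un
        atLeastLessThanSuc_atLeastAtMost del: upt_Suc) fastforce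
qed

definition represents_assignment :: "tstruct \<Rightarrow> nat \<Rightarrow> nat list set list \<Rightarrow> (nat \<Rightarrow> bool) \<Rightarrow> bool" where
  "represents_assignment A m Rs \<sigma> \<longleftrightarrow> length Rs = m \<and>
     (\<forall>h j. Var A h j \<longrightarrow> h \<le> m \<longrightarrow> (\<sigma> j \<longleftrightarrow> [j] \<in> Rs ! (h - 1)))"

lemma matrix_sem_evaluation_clauses:
  assumes tau: "tau_structure k A" and enc: "encodes_qdnf k A"
    and rep: "represents_assignment A k Rs \<sigma>"
  shows "matrix_sem A (block_prefix k) (Rs @ [S]) (evaluation_clauses k) \<longleftrightarrow>
    (\<exists>z\<in>dom A. [z] \<in> S) \<and>
    (\<forall>x\<in>dom A. [x] \<in> S \<longrightarrow> Clause A x \<and> (\<forall>j\<in>dom A. (Pos A x j \<longrightarrow> \<sigma> j) \<and> (Neg A x j \<longrightarrow> \<not> \<sigma> j)))"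
proof -
  have var: "h \<in> {1..k}" if "Var A h j" for h j
    using tau that by (auto simp: tau_structure_def)
  have sigma: "\<sigma> j \<longleftrightarrow> [j] \<in> Rs ! (h - 1)" if "Var A h j" for h j
    using rep var[OF that] that by (auto simp: represents_assignment_def)
  have block: "\<exists>h. Var A h j" if "Pos A i j \<or> Neg A i j" "j \<in> dom A" for i j
    using enc that unfolding encodes_qdnf_def by blast
  have literals: "(\<forall>h\<in>{1..k}. Var A h y \<longrightarrow>
       (Pos A x y \<longrightarrow> [y] \<in> Rs ! (h - 1)) \<and> (Neg A x y \<longrightarrow> [y] \<notin> Rs ! (h - 1))) \<longleftrightarrow>
    (Pos A x y \<longrightarrow> \<sigma> y) \<and> (Neg A x y \<longrightarrow> \<not> \<sigma> y)" if "y \<in> dom A" for x y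
    using var sigma block[OF _ that] by blast
  have "dom A \<noteq> {}"
    using tau by (simp add: tau_structure_def)
  moreover have "length Rs = k"
    using rep by (simp add: represents_assignment_def)
  ultimately show ?thesis
    unfolding matrix_sem_two_vars[OF evaluation_clauses_vars] evaluation_clauses_sem[OF \<open>length Rs = k\<close>]
    using literals by blast
qed

lemma ex_clause_relation_iff_dnf_true:
  assumes tau: "tau_structure k A" and enc: "encodes_qdnf k A"
    and rep: "represents_assignment A k Rs \<sigma>"
  shows "(\<exists>S. S \<subseteq> {us. length us = 1 \<and> set us \<subseteq> dom A} \<and>
      matrix_sem A (block_prefix k) (Rs @ [S]) (evaluation_clauses k)) \<longleftrightarrow> dnf_true A \<sigma>"
proof
  assume "\<exists>S. S \<subseteq> {us. length us = 1 \<and> set us \<subseteq> dom A} \<and>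
      matrix_sem A (block_prefix k) (Rs @ [S]) (evaluation_clauses k)"
  then show "dnf_true A \<sigma>"
    unfolding matrix_sem_evaluation_clauses[OF assms] dnf_true_def by blast
next
  assume "dnf_true A \<sigma>"
  then obtain i where "i \<in> dom A" "Clause A i"
    "\<forall>j\<in>dom A. (Pos A i j \<longrightarrow> \<sigma> j) \<and> (Neg A i j \<longrightarrow> \<not> \<sigma> j)"
    unfolding dnf_true_def by blast
  then show "\<exists>S. S \<subseteq> {us. length us = 1 \<and> set us \<subseteq> dom A} \<and>
      matrix_sem A (block_prefix k) (Rs @ [S]) (evaluation_clauses k)"
    unfolding matrix_sem_evaluation_clauses[OF assms] by (intro exI[of _ "{[i]}"]) auto
qed

lemma represents_assignment_snoc:
  assumes tau: "tau_structure k A" and enc: "encodes_qdnf k A"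
    and rep: "represents_assignment A m Rs \<sigma>"
    and R: "\<forall>j\<in>dom A. [j] \<in> R \<longleftrightarrow> f j"
  shows "represents_assignment A (Suc m) (Rs @ [R]) (upd_block A (Suc m) f \<sigma>)"
proof -
  have len: "length Rs = m"
    using rep by (simp add: represents_assignment_def)
  have "upd_block A (Suc m) f \<sigma> j \<longleftrightarrow> [j] \<in> (Rs @ [R]) ! (h - 1)"
    if var: "Var A h j" and "h \<le> Suc m" for h j
  proof -
    have "1 \<le> h" "j \<in> dom A"
      using tau var by (auto simp: tau_structure_def)
    show ?thesis
    proof (cases "h = Suc m")
      case True
      then show ?thesis
        using len var R \<open>j \<in> dom A\<close> by (simp add: upd_block_def nth_append)
    next
      case False
      then have "\<not> Var A (Suc m) j"
        using enc var \<open>j \<in> dom A\<close> unfolding encodes_qdnf_def by blast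
      moreover have "h - 1 < m"
        using False \<open>h \<le> Suc m\<close> \<open>1 \<le> h\<close> by linarith
      ultimately show ?thesis
        using rep len var by (simp add: represents_assignment_def upd_block_def nth_append)
    qed
  qed
  with len show ?thesis
    by (simp add: represents_assignment_def)
qed

lemma prefix_sem_block_prefix:
  assumes tau: "tau_structure k A" and enc: "encodes_qdnf k A"
  shows "n \<le> k \<Longrightarrow> represents_assignment A (k - n) Rs \<sigma> \<Longrightarrow>
    prefix_sem A (block_prefix k) (block_prefix n) Rs (evaluation_clauses k) \<longleftrightarrow> qeval A k (even n) n \<sigma>"
proof (induction n arbitrary: Rs \<sigma>)
  case 0
  then show ?case
    using ex_clause_relation_iff_dnf_true[OF tau enc] by simp
next
  case (Suc n)
  have "k - n = Suc (k - Suc n)"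
    using Suc.prems(1) by simp
  then have step: "prefix_sem A (block_prefix k) (block_prefix n) (Rs @ [R]) (evaluation_clauses k) \<longleftrightarrow>
      qeval A k (even n) n (upd_block A (k - n) f \<sigma>)" if "\<forall>j\<in>dom A. [j] \<in> R \<longleftrightarrow> f j" for R f
    using Suc represents_assignment_snoc[OF tau enc Suc.prems(2) that] by simp
  let ?prefix = "\<lambda>R. prefix_sem A (block_prefix k) (block_prefix n) (Rs @ [R]) (evaluation_clauses k)"
  let ?qeval = "\<lambda>f. qeval A k (even n) n (upd_block A (k - n) f \<sigma>)"
  show ?case
    using ex_unary_relation_iff[of "dom A" ?prefix ?qeval, OF step]
      all_unary_relation_iff[of "dom A" ?prefix ?qeval, OF step]
    by simp
qed

lemma krom_wf_dnf_sentence: "krom_wf k (dnf_sentence k)"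
  by (auto simp: krom_wf_def dnf_sentence_def encoding_clauses_def evaluation_clauses_def
      snd_nth_block_prefix)

lemma krom_class_dnf_sentence:
  assumes "1 \<le> k"
  shows "krom_class (odd (k - 1)) (k + 1) k (dnf_sentence k)"
proof -
  have "block_prefix k \<noteq> []" "fst (hd (block_prefix k)) = odd (k - 1)"
    using assms by (cases k; simp)+
  then show ?thesis
    using krom_wf_dnf_sentence alternations_block_prefix
    by (simp add: krom_class_def dnf_sentence_def)
qed

lemma krom_sat_dnf_sentence:
  assumes tau: "tau_structure k A"
  shows "krom_sat A (dnf_sentence k) \<longleftrightarrow> encodes_qdnf k A \<and> qeval A k (even k) k (\<lambda>_. False)"
proof -
  have "krom_sat A (dnf_sentence k) \<longleftrightarrow>
      encodes_qdnf k A \<and> prefix_sem A (block_prefix k) (block_prefix k) [] (evaluation_clauses k)"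
    unfolding krom_sat_def dnf_sentence_def
    by (simp add: prefix_sem_append_independent matrix_sem_encoding_clauses[OF tau])
  moreover have "represents_assignment A 0 [] (\<lambda>_. False)"
    using tau by (auto simp: represents_assignment_def tau_structure_def)
  ultimately show ?thesis
    using prefix_sem_block_prefix[OF tau, of k "[]"] by auto
qed

theorem proposition3p1:
  fixes k :: nat
  assumes "k \<ge> 1"
  shows "(even k \<longrightarrow> (\<exists>\<phi>. krom_class True (k + 1) k \<phi> \<and> krom_defines k \<phi> (sigma_dnf_eval k)))
       \<and> (odd k \<longrightarrow> (\<exists>\<phi>. krom_class False (k + 1) k \<phi> \<and> krom_defines k \<phi> (pi_dnf_eval k)))"
proof (intro conjI impI)
  assume "even k"
  with assms have "krom_class True (k + 1) k (dnf_sentence k)"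
    using krom_class_dnf_sentence by fastforce
  moreover have "krom_defines k (dnf_sentence k) (sigma_dnf_eval k)"
    using \<open>even k\<close> by (simp add: krom_defines_def sigma_dnf_eval_def krom_sat_dnf_sentence)
  ultimately show "\<exists>\<phi>. krom_class True (k + 1) k \<phi> \<and> krom_defines k \<phi> (sigma_dnf_eval k)"
    by blast
next
  assume "odd k"
  with assms have "krom_class False (k + 1) k (dnf_sentence k)"
    using krom_class_dnf_sentence by fastforce
  moreover have "krom_defines k (dnf_sentence k) (pi_dnf_eval k)"
    using \<open>odd k\<close> by (simp add: krom_defines_def pi_dnf_eval_def krom_sat_dnf_sentence)
  ultimately show "\<exists>\<phi>. krom_class False (k + 1) k \<phi> \<and> krom_defines k \<phi> (pi_dnf_eval k)"
    by blast
qed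

end
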